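(* Let $\alpha_1,\alpha_2>0$ satisfy $\alpha_1-\alpha_2\ge e\sinh 1$. Let $p$ be analytic in $\mathbb{D}$ with $p(0)=1$. If $$1+\alpha_1 zp'(z)+\alpha_2 z^2p''(z)\prec 1+\sin z,$$ then $p(z)\prec e^z$.
   Context: $\mathbb{D}$ is the open unit disk. For $g,h$ analytic in $\mathbb{D}$, $g\prec h$ means there is an analytic $w:\mathbb{D}\to\mathbb{D}$ with $w(0)=0$ and $g=h\circ w$. *)

theory Defs
  imports "HOL-Complex_Analysis.Complex_Analysis"
begin

abbreviation unit_disk :: "complex set" where
  "unit_disk \<equiv> ball 0 1"

definition subordinate :: "(complex \<Rightarrow> complex) \<Rightarrow> (complex \<Rightarrow> complex) \<Rightarrow> bool"
  (infix "\<prec>\<^sub>D" 50) where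
  "g \<prec>\<^sub>D h \<longleftrightarrow> (\<exists>w. w holomorphic_on unit_disk \<and> w ` unit_disk \<subseteq> unit_disk \<and> w 0 = 0 \<and>
      (\<forall>z\<in>unit_disk. g z = h (w z)))"

end

theory Submission
  imports Defs
begin

text \<open>
  Put \<open>q z = z * p' z\<close> and \<open>c = \<alpha>1 - \<alpha>2\<close>. The hypothesis says
  \<open>\<alpha>2 z q' z + c q z = sin (w z)\<close> for a Schwarz function \<open>w\<close>, and \<open>|sin| \<le> cosh 1\<close> on the
  closed unit disk. Along the ray \<open>t \<mapsto> t\<^sup>k z\<close> with \<open>k = \<alpha>2 / c\<close>, the derivative of
  \<open>t q (t\<^sup>k z)\<close> is \<open>(q + k \<zeta> q') \<zeta> = sin (w \<zeta>) / c\<close>, so integrating over \<open>[0,1]\<close> gives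
  \<open>|q| \<le> cosh 1 / c < 1/2\<close>, the last step because \<open>e sinh 1 > 2 cosh 1\<close>. The Schwarz lemma turns
  this into \<open>|p'| \<le> 1/2\<close>, hence \<open>|p - 1| < 1/2\<close> on the disk, and then \<open>Ln \<circ> p\<close> is a Schwarz
  function exhibiting \<open>p = exp \<circ> Ln \<circ> p\<close>.
\<close>

lemma two_cosh_1_less_exp_1_mult_sinh_1: "2 * cosh 1 < exp 1 * sinh (1 :: real)"
proof -
  define e :: real where "e = exp 1"
  have e: "e > 27/10"
    using e_approx_32 by (simp add: e_def abs_if split: if_split_asm)
  \<comment> \<open>after clearing denominators the claim is \<open>e\<^sup>3 - 2e\<^sup>2 - e - 2 > 0\<close>\<close>
  have "e * (e * (e - 2) - 1) > 2"
  proof -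
    have "e * (e - 2) > 27/10 * (7/10)" using e by (intro mult_strict_mono) auto
    hence "e * (e * (e - 2) - 1) > 27/10 * (89/100)" using e by (intro mult_strict_mono) auto
    thus ?thesis by simp
  qed
  hence "2 * e * (2 + e + 2 * e * e) < 2 * e * (e * e * e)"
    using e by (intro mult_strict_left_mono) (auto simp: algebra_simps)
  hence "2 * ((e + inverse e) / 2) < e * ((e - inverse e) / 2)"
    using e by (simp add: field_simps)
  thus ?thesis by (simp add: e_def cosh_def sinh_def exp_minus)
qed

lemma norm_sin_le_cosh_Im: "norm (sin z) \<le> cosh (Im z)"
proof -
  have "exp (2 * Im z) + inverse (exp (2 * Im z)) = 2 * cosh (2 * Im z)"
    by (simp add: cosh_def exp_minus)
  also have "\<dots> = 4 * cosh (Im z) ^ 2 - 2"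
    by (simp add: cosh_double_cosh)
  finally have "norm (sin z) ^ 2 = (4 * cosh (Im z) ^ 2 - 2 - 2 * cos (2 * Re z)) / 4"
    by (simp add: norm_sin_squared)
  also have "\<dots> \<le> cosh (Im z) ^ 2"
    using cos_ge_minus_one[of "2 * Re z"] by simp
  finally show ?thesis
    by (rule power2_le_imp_le) simp
qed

lemma norm_sin_le_cosh_1:
  fixes z :: complex
  assumes "norm z \<le> 1" shows "norm (sin z) \<le> cosh 1"
proof -
  have "cosh (Im z) = cosh \<bar>Im z\<bar>" by simp
  also have "\<dots> \<le> cosh 1"
    using abs_Im_le_cmod[of z] assms by (subst cosh_real_nonneg_le_iff) auto
  finally show ?thesis using norm_sin_le_cosh_Im[of z] by linarith
qed

lemma deriv_mult_id:
  assumes "f holomorphic_on S" and "open S" and "z \<in> S"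
  shows "deriv (\<lambda>z. z * f z) z = f z + z * deriv f z"
proof -
  have "(f has_field_derivative deriv f z) (at z)"
    using assms by (auto intro: holomorphic_derivI)
  hence "((\<lambda>z. z * f z) has_field_derivative f z + z * deriv f z) (at z)"
    by (auto intro!: derivative_eq_intros)
  thus ?thesis by (rule DERIV_imp_deriv)
qed

lemma has_vector_derivative_Euler_ray:
  fixes G :: "complex \<Rightarrow> complex" and k s :: real
  assumes "G holomorphic_on unit_disk" and "k > 0" and "s > 0"
    and "of_real (s powr k) * z \<in> unit_disk"
  defines "\<zeta> \<equiv> of_real (s powr k) * z"
  shows "((\<lambda>t. t *\<^sub>R G (of_real (t powr k) * z)) has_vector_derivative
           G \<zeta> + of_real k * \<zeta> * deriv G \<zeta>) (at s)"
proof -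
  have "((\<lambda>t. of_real (t powr k) * z) has_vector_derivative of_real (k * s powr (k - 1)) * z) (at s)"
    using \<open>s > 0\<close> by (auto intro!: derivative_eq_intros has_vector_derivative_mult_left
        has_vector_derivative_of_real)
  moreover have "(G has_field_derivative deriv G \<zeta>) (at \<zeta>)"
    using assms by (auto intro: holomorphic_derivI)
  ultimately have "((\<lambda>t. G (of_real (t powr k) * z)) has_vector_derivative
      of_real (k * s powr (k - 1)) * z * deriv G \<zeta>) (at s)"
    using field_vector_diff_chain_at unfolding \<zeta>_def o_def by blast
  from has_vector_derivative_scaleR[OF DERIV_ident this]
  have "((\<lambda>t. t *\<^sub>R G (of_real (t powr k) * z)) has_vector_derivative
      s *\<^sub>R (of_real (k * s powr (k - 1)) * z * deriv G \<zeta>) + G \<zeta>) (at s)"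
    unfolding \<zeta>_def by simp
  moreover have "s * s powr (k - 1) = s powr k"
    using \<open>s > 0\<close> by (simp add: powr_diff)
  hence "s *\<^sub>R (of_real (k * s powr (k - 1)) * z * deriv G \<zeta>) = of_real k * \<zeta> * deriv G \<zeta>"
    unfolding \<zeta>_def scaleR_conv_of_real
    by (metis (no_types, lifting) mult.assoc mult.left_commute of_real_mult)
  ultimately show ?thesis by (simp add: add.commute)
qed

lemma norm_le_if_norm_add_Euler_le:
  fixes G :: "complex \<Rightarrow> complex" and k M :: real
  assumes hol: "G holomorphic_on unit_disk" and "k > 0"
    and bound: "\<And>\<zeta>. \<zeta> \<in> unit_disk \<Longrightarrow> norm (G \<zeta> + of_real k * \<zeta> * deriv G \<zeta>) \<le> M"
    and z: "z \<in> unit_disk"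
  shows "norm (G z) \<le> M"
proof -
  define X where "X t = t *\<^sub>R G (of_real (t powr k) * z)" for t :: real
  have on_ray: "of_real (t powr k) * z \<in> unit_disk" if "0 \<le> t" "t \<le> 1" for t
  proof -
    have "norm (of_real (t powr k) * z) = t powr k * norm z"
      by (simp add: norm_mult)
    also have "\<dots> \<le> norm z"
      using that \<open>k > 0\<close> powr_le1[of k t] by (simp add: mult_left_le_one_le)
    finally show ?thesis using z by simp
  qed
  have "continuous_on {0..1} X"
    unfolding X_def using \<open>k > 0\<close> on_ray
    by (intro continuous_intros continuous_on_compose2[OF holomorphic_on_imp_continuous_on[OF hol]]
        continuous_on_powr') auto
  moreover have "(X has_vector_derivative G \<zeta> + of_real k * \<zeta> * deriv G \<zeta>) (at t)"
    and "norm (G \<zeta> + of_real k * \<zeta> * deriv G \<zeta>) \<le> M"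
    if "0 < t" "t < 1" and "\<zeta> = of_real (t powr k) * z" for t \<zeta>
    using that on_ray[of t] bound[of \<zeta>] has_vector_derivative_Euler_ray[OF hol \<open>k > 0\<close>]
    unfolding X_def by auto
  ultimately have "norm (X 1 - X 0) \<le> M * 1 - M * 0"
    by (intro differentiable_bound_general[of 0 1 X "\<lambda>t. M * t"])
       (auto intro!: continuous_intros derivative_eq_intros)
  thus ?thesis by (simp add: X_def)
qed

lemma norm_le_if_norm_mult_id_less:
  fixes f :: "complex \<Rightarrow> complex"
  assumes hol: "f holomorphic_on unit_disk"
    and bound: "\<And>z. z \<in> unit_disk \<Longrightarrow> norm (z * f z) < M"
    and z: "z \<in> unit_disk"
  shows "norm (f z) \<le> M"
proof -
  have "M > 0" using bound[of 0] by simp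
  define g where "g z = z * f z / of_real M" for z
  have "g 0 = 0" by (simp add: g_def)
  have hol_g: "g holomorphic_on unit_disk"
    unfolding g_def using hol by (intro holomorphic_intros) auto
  have g_lt_1: "norm (g z) < 1" if "norm z < 1" for z
    using bound[of z] that \<open>M > 0\<close> by (simp add: g_def norm_divide)
  show ?thesis
  proof (cases "z = 0")
    case True
    have "(f has_field_derivative deriv f 0) (at 0)"
      using hol by (auto intro: holomorphic_derivI)
    hence "(g has_field_derivative f 0 / of_real M) (at 0)"
      unfolding g_def using \<open>M > 0\<close> by (auto intro!: derivative_eq_intros)
    hence "deriv g 0 = f 0 / of_real M" by (rule DERIV_imp_deriv)
    with Schwarz_Lemma(2)[OF hol_g \<open>g 0 = 0\<close> g_lt_1, of 0] \<open>M > 0\<close> True show ?thesis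
      by (simp add: norm_divide)
  next
    case False
    have "norm (g z) \<le> norm z"
      using Schwarz_Lemma(1)[OF hol_g \<open>g 0 = 0\<close> g_lt_1] z by simp
    with False \<open>M > 0\<close> show ?thesis
      by (simp add: g_def norm_mult norm_divide field_simps)
  qed
qed

lemma norm_diff_le_if_norm_deriv_le:
  fixes f :: "complex \<Rightarrow> complex"
  assumes hol: "f holomorphic_on unit_disk"
    and bound: "\<And>z. z \<in> unit_disk \<Longrightarrow> norm (deriv f z) \<le> B"
    and z: "z \<in> unit_disk"
  shows "norm (f z - f 0) \<le> B * norm z"
proof -
  have "norm (f z - f 0) \<le> B * norm (z - 0)"
    by (rule field_differentiable_bound[OF convex_ball _ bound z])
       (use hol in \<open>auto intro: holomorphic_derivI has_field_derivative_at_within\<close>)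
  thus ?thesis by simp
qed

lemma subordinate_exp_if_norm_diff_1_less:
  assumes hol: "f holomorphic_on unit_disk" and "f 0 = 1"
    and near_1: "\<And>z. z \<in> unit_disk \<Longrightarrow> norm (f z - 1) < 1/2"
  shows "f \<prec>\<^sub>D exp"
  unfolding subordinate_def
proof (intro exI[of _ "\<lambda>z. Ln (f z)"] conjI ballI)
  have "f z \<notin> \<real>\<^sub>\<le>\<^sub>0" if "z \<in> unit_disk" for z
    using abs_Re_le_cmod[of "f z - 1"] near_1[OF that] by (auto simp: complex_nonpos_Reals_iff)
  with hol show "(\<lambda>z. Ln (f z)) holomorphic_on unit_disk"
    by (intro holomorphic_on_Ln') auto
  show "(\<lambda>z. Ln (f z)) ` unit_disk \<subseteq> unit_disk"
  proof clarify
    fix z :: complex assume "z \<in> unit_disk"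
    with near_1 have "norm (Ln (1 + (f z - 1))) \<le> 2 * norm (f z - 1)"
      by (intro norm_Ln_le)
    with near_1[OF \<open>z \<in> unit_disk\<close>] show "Ln (f z) \<in> unit_disk" by simp
  qed
  show "Ln (f 0) = 0" using \<open>f 0 = 1\<close> by simp
  fix z :: complex assume "z \<in> unit_disk"
  hence "f z \<noteq> 0" using near_1 by force
  thus "f z = exp (Ln (f z))" by simp
qed

lemma norm_mult_deriv_le_if_Euler_eq_bounded:
  fixes p h :: "complex \<Rightarrow> complex" and \<alpha>1 \<alpha>2 M :: real
  assumes hol: "p holomorphic_on unit_disk" and "\<alpha>2 > 0" and "\<alpha>1 > \<alpha>2"
    and Euler: "\<And>z. z \<in> unit_disk \<Longrightarrow>
      of_real \<alpha>1 * z * deriv p z + of_real \<alpha>2 * z\<^sup>2 * deriv (deriv p) z = h z"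
    and bound: "\<And>z. z \<in> unit_disk \<Longrightarrow> norm (h z) \<le> M"
    and z: "z \<in> unit_disk"
  shows "norm (z * deriv p z) \<le> M / (\<alpha>1 - \<alpha>2)"
proof -
  define c where "c = \<alpha>1 - \<alpha>2"
  have "c > 0" using \<open>\<alpha>1 > \<alpha>2\<close> by (simp add: c_def)
  define G where "G = (\<lambda>z. z * deriv p z)"
  have hol_p': "deriv p holomorphic_on unit_disk"
    using hol by (rule holomorphic_deriv) simp
  hence hol_G: "G holomorphic_on unit_disk"
    unfolding G_def by (intro holomorphic_on_mult holomorphic_on_ident)
  have "norm (G z) \<le> M / c"
  proof (rule norm_le_if_norm_add_Euler_le[OF hol_G _ _ z])
    show "\<alpha>2 / c > 0" using \<open>\<alpha>2 > 0\<close> \<open>c > 0\<close> by simp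
    fix \<zeta> :: complex assume "\<zeta> \<in> unit_disk"
    have "of_real c * G \<zeta> + of_real \<alpha>2 * \<zeta> * deriv G \<zeta> = h \<zeta>"
      using Euler[OF \<open>\<zeta> \<in> unit_disk\<close>] deriv_mult_id[OF hol_p' _ \<open>\<zeta> \<in> unit_disk\<close>]
      by (simp add: G_def c_def algebra_simps power2_eq_square)
    with \<open>c > 0\<close> have "G \<zeta> + of_real (\<alpha>2 / c) * \<zeta> * deriv G \<zeta> = h \<zeta> / of_real c"
      by (simp add: field_simps)
    with bound[OF \<open>\<zeta> \<in> unit_disk\<close>] \<open>c > 0\<close>
    show "norm (G \<zeta> + of_real (\<alpha>2 / c) * \<zeta> * deriv G \<zeta>) \<le> M / c"
      by (simp add: norm_divide divide_right_mono)
  qed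
  thus ?thesis by (simp add: G_def c_def)
qed

theorem theorem4p7:
  fixes \<alpha>1 \<alpha>2 :: real and p :: "complex \<Rightarrow> complex"
  assumes "\<alpha>1 > 0" and "\<alpha>2 > 0"
    and "\<alpha>1 - \<alpha>2 \<ge> exp 1 * sinh 1"
    and "p holomorphic_on unit_disk" and "p 0 = 1"
    and "(\<lambda>z. 1 + of_real \<alpha>1 * z * deriv p z + of_real \<alpha>2 * z\<^sup>2 * deriv (deriv p) z)
           \<prec>\<^sub>D (\<lambda>z. 1 + sin z)"
  shows "p \<prec>\<^sub>D exp"
proof -
  obtain w where w_disk: "w ` unit_disk \<subseteq> unit_disk" and w_eq: "\<And>z. z \<in> unit_disk \<Longrightarrow>
      1 + of_real \<alpha>1 * z * deriv p z + of_real \<alpha>2 * z\<^sup>2 * deriv (deriv p) z = 1 + sin (w z)"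
    using assms(6) unfolding subordinate_def by blast
  have "2 * cosh 1 < \<alpha>1 - \<alpha>2"
    using two_cosh_1_less_exp_1_mult_sinh_1 assms(3) by simp
  moreover from this have "\<alpha>1 > \<alpha>2"
    using cosh_real_pos[of 1] by linarith
  ultimately have "cosh 1 / (\<alpha>1 - \<alpha>2) < 1/2"
    by (simp add: field_simps)
  have "norm (sin (w z)) \<le> cosh 1" if "z \<in> unit_disk" for z
  proof -
    from w_disk that have "w z \<in> unit_disk" by blast
    thus ?thesis by (intro norm_sin_le_cosh_1) simp
  qed
  with \<open>\<alpha>1 > \<alpha>2\<close> have "norm (z * deriv p z) \<le> cosh 1 / (\<alpha>1 - \<alpha>2)" if "z \<in> unit_disk" for z
    using norm_mult_deriv_le_if_Euler_eq_bounded[OF assms(4,2) _ _ _ that] w_eq by simp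
  with \<open>cosh 1 / (\<alpha>1 - \<alpha>2) < 1/2\<close> have "norm (z * deriv p z) < 1/2" if "z \<in> unit_disk" for z
    using that by (meson order_le_less_trans)
  moreover have "deriv p holomorphic_on unit_disk"
    using assms(4) by (rule holomorphic_deriv) simp
  ultimately have "norm (deriv p z) \<le> 1/2" if "z \<in> unit_disk" for z
    using norm_le_if_norm_mult_id_less that by blast
  hence "norm (p z - 1) < 1/2" if "z \<in> unit_disk" for z
    using norm_diff_le_if_norm_deriv_le[OF assms(4) _ that, of "1/2"] that assms(5) by fastforce
  thus ?thesis
    by (rule subordinate_exp_if_norm_diff_1_less[OF assms(4,5)])
qed

end
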